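(* Let $\mathbf A$ be a residuated semigroup and let $\mathrm{Idp}(\mathbf A)$ be its set of positive idempotents. For $p\in\mathrm{Idp}(\mathbf A)$ put $A_p:=\{a\in A: a\backslash a=p\}$ and ${}_pA:=\{a\in A: a/a=p\}$. The following are equivalent: (1) $\mathbf A$ satisfies $y\le (x/x)y$ and $y\le y(x\backslash x)$ for all $x,y\in A$; (2) every element of the form $a\backslash a$ or $a/a$ ($a\in A$) is positive; (3) $\mathrm{Idp}(\mathbf A)=\{a/a: a\in A\}=\{a\backslash a: a\in A\}$; (4) both families $\{{}_pA: p\in\mathrm{Idp}(\mathbf A)\}$ and $\{A_p: p\in\mathrm{Idp}(\mathbf A)\}$ are partitions of $A$ (i.e. their members cover $A$ and are pairwise disjoint).
   Context: A residuated semigroup is a structure $\langle A,\le,\cdot,\backslash,/\rangle$ where $\langle A,\le\rangle$ is a poset, $\langle A,\cdot\rangle$ is a semigroup (we write $xy$ for $x\cdot y$), and for all $x,y,z$: $xy\le z\iff x\le z/y\iff y\le x\backslash z$. An element $p$ is positive if $a\le pa$ and $a\le ap$ for all $a\in A$; it is idempotent if $pp=p$. *)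

theory Defs
  imports Main
begin

text \<open>A residuated semigroup on the carrier type 'a, given by the order le,
 the multiplication mult, the left division ldiv (x \ y = ldiv x y) and the
 right division rdiv (x / y = rdiv x y).\<close>

definition residuated_semigroup ::
  "('a \<Rightarrow> 'a \<Rightarrow> bool) \<Rightarrow> ('a \<Rightarrow> 'a \<Rightarrow> 'a) \<Rightarrow> ('a \<Rightarrow> 'a \<Rightarrow> 'a) \<Rightarrow> ('a \<Rightarrow> 'a \<Rightarrow> 'a) \<Rightarrow> bool" where
  "residuated_semigroup le mult ldiv rdiv \<longleftrightarrow>
     (\<forall>x. le x x) \<and>
     (\<forall>x y. le x y \<and> le y x \<longrightarrow> x = y) \<and>
     (\<forall>x y z. le x y \<and> le y z \<longrightarrow> le x z) \<and>
     (\<forall>x y z. mult (mult x y) z = mult x (mult y z)) \<and>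
     (\<forall>x y z. (le (mult x y) z \<longleftrightarrow> le x (rdiv z y)) \<and>
              (le (mult x y) z \<longleftrightarrow> le y (ldiv x z)))"

definition positive_el :: "('a \<Rightarrow> 'a \<Rightarrow> bool) \<Rightarrow> ('a \<Rightarrow> 'a \<Rightarrow> 'a) \<Rightarrow> 'a \<Rightarrow> bool" where
  "positive_el le mult p \<longleftrightarrow> (\<forall>a. le a (mult p a) \<and> le a (mult a p))"

definition idempotent_el :: "('a \<Rightarrow> 'a \<Rightarrow> 'a) \<Rightarrow> 'a \<Rightarrow> bool" where
  "idempotent_el mult p \<longleftrightarrow> mult p p = p"

definition Idp :: "('a \<Rightarrow> 'a \<Rightarrow> bool) \<Rightarrow> ('a \<Rightarrow> 'a \<Rightarrow> 'a) \<Rightarrow> 'a set" where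
  "Idp le mult = {p. positive_el le mult p \<and> idempotent_el mult p}"

definition A_sub :: "('a \<Rightarrow> 'a \<Rightarrow> 'a) \<Rightarrow> 'a \<Rightarrow> 'a set" where
  "A_sub ldiv p = {a. ldiv a a = p}"

definition sub_A :: "('a \<Rightarrow> 'a \<Rightarrow> 'a) \<Rightarrow> 'a \<Rightarrow> 'a set" where
  "sub_A rdiv p = {a. rdiv a a = p}"

definition is_partition_family :: "'b set \<Rightarrow> ('b \<Rightarrow> 'a set) \<Rightarrow> bool" where
  "is_partition_family I F \<longleftrightarrow>
     (\<Union>p\<in>I. F p) = UNIV \<and> (\<forall>p\<in>I. \<forall>q\<in>I. p \<noteq> q \<longrightarrow> F p \<inter> F q = {})"

end

theory Submission
  imports Defs
begin

text \<open>Each of the four conditions says that every \<open>a\a\<close> and every \<open>a/a\<close> is a positive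
  idempotent. In any residuated semigroup \<open>(a\a)(a\a) \<le> a\a\<close>, so positivity of \<open>a\a\<close> already
  forces idempotency, and a positive idempotent \<open>p\<close> satisfies \<open>p\p = p = p/p\<close>, so \<open>Idp(A)\<close> is
  always contained in both ranges. Finally \<open>{A\<^sub>p}\<close> and \<open>{\<^sub>pA}\<close> are the fibres of the maps
  \<open>a \<mapsto> a\a\<close> and \<open>a \<mapsto> a/a\<close>; fibres are always disjoint, and they cover \<open>A\<close> exactly when the
  index set contains the range of the map.\<close>

lemma is_partition_family_fibres_iff:
  "is_partition_family I (\<lambda>p. {a. f a = p}) \<longleftrightarrow> range f \<subseteq> I"
  unfolding is_partition_family_def by blast

locale res_semigroup =
  fixes le :: "'a \<Rightarrow> 'a \<Rightarrow> bool" and mult ldiv rdiv :: "'a \<Rightarrow> 'a \<Rightarrow> 'a"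
  assumes residuated: "residuated_semigroup le mult ldiv rdiv"
begin

lemma le_refl: "le x x"
  using residuated unfolding residuated_semigroup_def by blast

lemma le_antisym: "le x y \<Longrightarrow> le y x \<Longrightarrow> x = y"
  using residuated unfolding residuated_semigroup_def by blast

lemma le_trans: "le x y \<Longrightarrow> le y z \<Longrightarrow> le x z"
  using residuated unfolding residuated_semigroup_def by blast

lemma mult_assoc: "mult (mult x y) z = mult x (mult y z)"
  using residuated unfolding residuated_semigroup_def by blast

lemma mult_le_iff_le_rdiv: "le (mult x y) z \<longleftrightarrow> le x (rdiv z y)"
  using residuated unfolding residuated_semigroup_def by blast

lemma mult_le_iff_le_ldiv: "le (mult x y) z \<longleftrightarrow> le y (ldiv x z)"
  using residuated unfolding residuated_semigroup_def by blast

lemma mult_ldiv_le: "le (mult a (ldiv a b)) b"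
  using mult_le_iff_le_ldiv le_refl by blast

lemma rdiv_mult_le: "le (mult (rdiv b a) a) b"
  using mult_le_iff_le_rdiv le_refl by blast

lemma mult_left_mono: "le x y \<Longrightarrow> le (mult z x) (mult z y)"
  by (meson mult_le_iff_le_ldiv le_refl le_trans)

lemma mult_right_mono: "le x y \<Longrightarrow> le (mult x z) (mult y z)"
  by (meson mult_le_iff_le_rdiv le_refl le_trans)

lemma ldiv_self_square_le: "le (mult (ldiv a a) (ldiv a a)) (ldiv a a)"
proof -
  have "le (mult (mult a (ldiv a a)) (ldiv a a)) (mult a (ldiv a a))"
    using mult_right_mono mult_ldiv_le by blast
  then have "le (mult (mult a (ldiv a a)) (ldiv a a)) a"
    using mult_ldiv_le le_trans by blast
  then show ?thesis
    using mult_le_iff_le_ldiv mult_assoc by metis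
qed

lemma rdiv_self_square_le: "le (mult (rdiv a a) (rdiv a a)) (rdiv a a)"
proof -
  have "le (mult (rdiv a a) (mult (rdiv a a) a)) (mult (rdiv a a) a)"
    using mult_left_mono rdiv_mult_le by blast
  then have "le (mult (rdiv a a) (mult (rdiv a a) a)) a"
    using rdiv_mult_le le_trans by blast
  then show ?thesis
    using mult_le_iff_le_rdiv mult_assoc by metis
qed

lemma ldiv_self_in_Idp_iff_positive:
  "ldiv a a \<in> Idp le mult \<longleftrightarrow> positive_el le mult (ldiv a a)"
proof
  assume "positive_el le mult (ldiv a a)"
  then have "le (ldiv a a) (mult (ldiv a a) (ldiv a a))"
    unfolding positive_el_def by blast
  with ldiv_self_square_le have "idempotent_el mult (ldiv a a)"
    unfolding idempotent_el_def by (simp add: le_antisym)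
  with \<open>positive_el le mult (ldiv a a)\<close> show "ldiv a a \<in> Idp le mult"
    unfolding Idp_def by simp
qed (simp add: Idp_def)

lemma rdiv_self_in_Idp_iff_positive:
  "rdiv a a \<in> Idp le mult \<longleftrightarrow> positive_el le mult (rdiv a a)"
proof
  assume "positive_el le mult (rdiv a a)"
  then have "le (rdiv a a) (mult (rdiv a a) (rdiv a a))"
    unfolding positive_el_def by blast
  with rdiv_self_square_le have "idempotent_el mult (rdiv a a)"
    unfolding idempotent_el_def by (simp add: le_antisym)
  with \<open>positive_el le mult (rdiv a a)\<close> show "rdiv a a \<in> Idp le mult"
    unfolding Idp_def by simp
qed (simp add: Idp_def)

lemma Idp_ldiv_self:
  assumes "p \<in> Idp le mult"
  shows "ldiv p p = p"
proof -
  from assms have pos: "\<And>a. le a (mult p a)" and idem: "mult p p = p"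
    unfolding Idp_def positive_el_def idempotent_el_def by auto
  have "le p (ldiv p p)"
    using mult_le_iff_le_ldiv[of p p p] idem le_refl by simp
  moreover have "le (ldiv p p) p"
    using pos[of "ldiv p p"] mult_ldiv_le[of p p] le_trans by blast
  ultimately show ?thesis
    using le_antisym by blast
qed

lemma Idp_rdiv_self:
  assumes "p \<in> Idp le mult"
  shows "rdiv p p = p"
proof -
  from assms have pos: "\<And>a. le a (mult a p)" and idem: "mult p p = p"
    unfolding Idp_def positive_el_def idempotent_el_def by auto
  have "le p (rdiv p p)"
    using mult_le_iff_le_rdiv[of p p p] idem le_refl by simp
  moreover have "le (rdiv p p) p"
    using pos[of "rdiv p p"] rdiv_mult_le[of p p] le_trans by blast
  ultimately show ?thesis
    using le_antisym by blast
qed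

lemma Idp_subset_range_ldiv_self: "Idp le mult \<subseteq> range (\<lambda>a. ldiv a a)"
proof
  fix p
  assume "p \<in> Idp le mult"
  then have "p = ldiv p p"
    by (simp add: Idp_ldiv_self)
  then show "p \<in> range (\<lambda>a. ldiv a a)"
    by (rule range_eqI)
qed

lemma Idp_subset_range_rdiv_self: "Idp le mult \<subseteq> range (\<lambda>a. rdiv a a)"
proof
  fix p
  assume "p \<in> Idp le mult"
  then have "p = rdiv p p"
    by (simp add: Idp_rdiv_self)
  then show "p \<in> range (\<lambda>a. rdiv a a)"
    by (rule range_eqI)
qed

lemma ldiv_self_positive:
  assumes lower: "\<And>x y. le y (mult (rdiv x x) y) \<and> le y (mult y (ldiv x x))"
  shows "positive_el le mult (ldiv a a)"
proof -
  let ?u = "ldiv a a"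
  have "le (rdiv ?u ?u) (mult (rdiv ?u ?u) ?u)"
    using lower[where x=a and y="rdiv ?u ?u"] by simp
  then have "le (rdiv ?u ?u) ?u"
    using rdiv_mult_le le_trans by blast
  then have "le y (mult ?u y)" for y
    using lower[where x="?u" and y=y] mult_right_mono[of "rdiv ?u ?u" ?u y] le_trans by blast
  moreover have "le y (mult y ?u)" for y
    using lower[where x=a and y=y] by simp
  ultimately show ?thesis
    unfolding positive_el_def by simp
qed

lemma rdiv_self_positive:
  assumes lower: "\<And>x y. le y (mult (rdiv x x) y) \<and> le y (mult y (ldiv x x))"
  shows "positive_el le mult (rdiv a a)"
proof -
  let ?v = "rdiv a a"
  have "le (ldiv ?v ?v) (mult ?v (ldiv ?v ?v))"
    using lower[where x=a and y="ldiv ?v ?v"] by simp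
  then have "le (ldiv ?v ?v) ?v"
    using mult_ldiv_le le_trans by blast
  then have "le y (mult y ?v)" for y
    using lower[where x="?v" and y=y] mult_left_mono[of "ldiv ?v ?v" ?v y] le_trans by blast
  moreover have "le y (mult ?v y)" for y
    using lower[where x=a and y=y] by simp
  ultimately show ?thesis
    unfolding positive_el_def by simp
qed

end

theorem lemma3p1:
  fixes le :: "'a \<Rightarrow> 'a \<Rightarrow> bool" and mult ldiv rdiv :: "'a \<Rightarrow> 'a \<Rightarrow> 'a"
  assumes "residuated_semigroup le mult ldiv rdiv"
  defines "C1 \<equiv> (\<forall>x y. le y (mult (rdiv x x) y) \<and> le y (mult y (ldiv x x)))"
      and "C2 \<equiv> (\<forall>a. positive_el le mult (ldiv a a) \<and> positive_el le mult (rdiv a a))"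
      and "C3 \<equiv> (Idp le mult = range (\<lambda>a. rdiv a a) \<and> Idp le mult = range (\<lambda>a. ldiv a a))"
      and "C4 \<equiv> (is_partition_family (Idp le mult) (sub_A rdiv) \<and>
                  is_partition_family (Idp le mult) (A_sub ldiv))"
  shows "(C1 \<longleftrightarrow> C2) \<and> (C2 \<longleftrightarrow> C3) \<and> (C3 \<longleftrightarrow> C4)"
proof -
  interpret res_semigroup le mult ldiv rdiv
    using assms(1) by unfold_locales
  define divs_in_Idp where
    "divs_in_Idp \<equiv> range (\<lambda>a. rdiv a a) \<subseteq> Idp le mult \<and> range (\<lambda>a. ldiv a a) \<subseteq> Idp le mult"
  have "C1 \<longleftrightarrow> C2"
  proof
    assume C1
    then have "\<And>x y. le y (mult (rdiv x x) y) \<and> le y (mult y (ldiv x x))"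
      unfolding C1_def by blast
    then show C2
      unfolding C2_def using ldiv_self_positive rdiv_self_positive by simp
  next
    assume C2
    then show C1
      unfolding C1_def C2_def positive_el_def by simp
  qed
  moreover have "C2 \<longleftrightarrow> divs_in_Idp"
    unfolding C2_def divs_in_Idp_def image_subset_iff
    by (simp add: ldiv_self_in_Idp_iff_positive rdiv_self_in_Idp_iff_positive
        all_conj_distrib conj_commute)
  moreover have "C3 \<longleftrightarrow> divs_in_Idp"
    unfolding C3_def divs_in_Idp_def
    using Idp_subset_range_ldiv_self Idp_subset_range_rdiv_self by (metis subset_antisym)
  moreover have "C4 \<longleftrightarrow> divs_in_Idp"
    unfolding C4_def divs_in_Idp_def sub_A_def[abs_def] A_sub_def[abs_def]
    by (simp add: is_partition_family_fibres_iff)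
  ultimately show ?thesis
    by argo
qed

end
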